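(* Let $H$ be a $6\times 6$ complex Hadamard matrix having a $3\times 3$ submatrix (formed by any three rows and any three columns) with zero determinant. Then $H$ belongs to the family $K_6^{(3)}$, i.e. $H$ is equivalent to a dephased complex Hadamard matrix whose core contains an entry equal to $-1$.
   Context: A complex Hadamard matrix of order $n$ is an $n\times n$ complex matrix with all entries of modulus $1$ satisfying $HH^\ast=nI_n$. Two complex Hadamard matrices $H,K$ are equivalent if $K=P_1D_1HD_2P_2$ for permutation matrices $P_1,P_2$ and diagonal unitary matrices $D_1,D_2$. A complex Hadamard matrix is dephased if its first row and first column consist of $1$'s; its core is the lower right $(n-1)\times(n-1)$ submatrix. We say a $6\times6$ complex Hadamard matrix belongs to the family $K_6^{(3)}$ if it is equivalent to a dephased complex Hadamard matrix whose core contains an entry $-1$ (by a theorem of Karlsson these are exactly the matrices of his three-parameter family $K_6^{(3)}$, equivalently the $H_2$-reducible ones). *)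

theory Defs
  imports "HOL-Analysis.Analysis" "HOL-Library.Numeral_Type"
begin

definition conj_transpose :: "complex ^ 'n ^ 'm \<Rightarrow> complex ^ 'm ^ 'n" where
  "conj_transpose A = (\<chi> i j. cnj (A $ j $ i))"

definition complex_hadamard :: "complex ^ 'n ^ 'n \<Rightarrow> bool" where
  "complex_hadamard H \<longleftrightarrow>
     (\<forall>i j. cmod (H $ i $ j) = 1) \<and>
     H ** conj_transpose H = of_nat CARD('n) *\<^sub>R mat 1"

definition permutation_matrix :: "complex ^ 'n ^ 'n \<Rightarrow> bool" where
  "permutation_matrix P \<longleftrightarrow>
     (\<exists>p. p permutes (UNIV :: 'n set) \<and> P = (\<chi> i j. if j = p i then 1 else 0))"

definition diagonal_unitary :: "complex ^ 'n ^ 'n \<Rightarrow> bool" where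
  "diagonal_unitary D \<longleftrightarrow>
     (\<exists>d. (\<forall>i. cmod (d i) = 1) \<and> D = (\<chi> i j. if i = j then d i else 0))"

definition hadamard_equivalent :: "complex ^ 'n ^ 'n \<Rightarrow> complex ^ 'n ^ 'n \<Rightarrow> bool" where
  "hadamard_equivalent H K \<longleftrightarrow>
     (\<exists>P1 D1 D2 P2. permutation_matrix P1 \<and> diagonal_unitary D1 \<and>
        diagonal_unitary D2 \<and> permutation_matrix P2 \<and>
        K = P1 ** D1 ** H ** D2 ** P2)"

text \<open>Dephased w.r.t. the first index 0 of the index type (indices 0..5 for order 6).\<close>
definition dephased :: "complex ^ 6 ^ 6 \<Rightarrow> bool" where
  "dephased H \<longleftrightarrow> (\<forall>j. H $ 0 $ j = 1) \<and> (\<forall>i. H $ i $ 0 = 1)"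

definition core_has_minus_one :: "complex ^ 6 ^ 6 \<Rightarrow> bool" where
  "core_has_minus_one H \<longleftrightarrow> (\<exists>i j. i \<noteq> 0 \<and> j \<noteq> 0 \<and> H $ i $ j = -1)"

definition in_K6_3 :: "complex ^ 6 ^ 6 \<Rightarrow> bool" where
  "in_K6_3 H \<longleftrightarrow>
     (\<exists>K. complex_hadamard K \<and> hadamard_equivalent H K \<and> dephased K \<and> core_has_minus_one K)"

definition submatrix3 :: "complex ^ 6 ^ 6 \<Rightarrow> (3 \<Rightarrow> 6) \<Rightarrow> (3 \<Rightarrow> 6) \<Rightarrow> complex ^ 3 ^ 3" where
  "submatrix3 H r c = (\<chi> i j. H $ r i $ c j)"

end

theory Submission
  imports Defs
begin

(* Call a complex Hadamard matrix H2-reducible if it has a 2x2 submatrix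
   on rows i, k and columns j, l with H_ij H_kl + H_il H_kj = 0; after dephasing at
   (i, j) such a submatrix becomes [[1, 1], [1, -1]], so the matrix lies in K_6^(3).
   It remains to show that a singular 3x3 submatrix forces H2-reducibility:
   (1) A singular 3x3 matrix with unimodular entries has two proportional rows or two
       proportional columns: a kernel vector with a zero coordinate gives proportional
       columns; otherwise every row yields a unimodular solution (z, w) of the fixed
       equation x1 + x2 z + x3 w = 0, which has at most two such solutions.
   (2) If two rows of a Hadamard matrix of order 2m are proportional on m columns,
       orthogonality of the rows forces the remaining m terms of their inner product
       to equal -1 each, which exhibits the vanishing 2x2 relation. *)

lemma unimodular_mult_cnj: "cmod z = 1 \<Longrightarrow> z * cnj z = 1"
  by (metis complex_norm_square of_real_1 power_one)

lemma unimodular_cnj_mult: "cmod z = 1 \<Longrightarrow> cnj z * z = 1"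
  using unimodular_mult_cnj by (simp add: mult.commute)

text \<open>Unimodular numbers summing to -card S must all be equal to -1: their real parts
  are at least -1, so the sum can only reach -card S if every real part is -1.\<close>

lemma unimodular_sum_neg_card:
  fixes u :: "'a \<Rightarrow> complex"
  assumes "finite S" and unit: "\<And>j. j \<in> S \<Longrightarrow> cmod (u j) = 1"
    and sum: "(\<Sum>j\<in>S. u j) = - of_nat (card S)" and "j \<in> S"
  shows "u j = -1"
proof -
  have "(\<Sum>t\<in>S. Re (u t) + 1) = Re (\<Sum>t\<in>S. u t) + card S"
    by (simp add: sum.distrib)
  then have zero: "(\<Sum>t\<in>S. Re (u t) + 1) = 0" using sum by simp
  have nonneg: "0 \<le> Re (u t) + 1" if "t \<in> S" for t
    using abs_Re_le_cmod[of "u t"] unit[OF that] by linarith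
  have "(\<Sum>t\<in>S. Re (u t) + 1) = 0 \<longleftrightarrow> (\<forall>t\<in>S. Re (u t) + 1 = 0)"
    using \<open>finite S\<close> nonneg by (rule sum_nonneg_eq_0_iff)
  then have "\<forall>t\<in>S. Re (u t) + 1 = 0" using zero by blast
  then have "Re (u j) + 1 = 0" using \<open>j \<in> S\<close> by blast
  then have re: "Re (u j) = -1" by linarith
  then have "Im (u j) = 0" using cmod_power2[of "u j"] unit[OF \<open>j \<in> S\<close>] by simp
  then show ?thesis using re by (simp add: complex_eq_iff)
qed

lemma hadamard_unimodular: "complex_hadamard H \<Longrightarrow> cmod (H$i$j) = 1"
  unfolding complex_hadamard_def by blast

lemma hadamard_rows_orthogonal:
  fixes H :: "complex^'n^'n"
  assumes "complex_hadamard H"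
  shows "(\<Sum>j\<in>UNIV. H$p$j * cnj (H$q$j)) = (if p = q then of_nat CARD('n) else 0)"
proof -
  have "(H ** conj_transpose H)$p$q = (of_nat CARD('n) *\<^sub>R mat 1 :: complex^'n^'n)$p$q"
    using assms unfolding complex_hadamard_def by simp
  then show ?thesis
    by (simp add: matrix_matrix_mult_def conj_transpose_def mat_def)
      (simp add: scaleR_conv_of_real)
qed

text \<open>Since H / sqrt n is unitary, also H* H = n I: the columns are orthogonal.\<close>

lemma hadamard_columns_orthogonal:
  fixes H :: "complex^'n^'n"
  assumes had: "complex_hadamard H"
  shows "(\<Sum>t\<in>UNIV. cnj (H$t$a) * H$t$b) = (if a = b then of_nat CARD('n) else 0)"
proof -
  define G :: "complex^'n^'n" where "G = (\<chi> i j. cnj (H$j$i) / of_nat CARD('n))"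
  have "H ** G = mat 1"
    using hadamard_rows_orthogonal[OF had]
    by (simp add: vec_eq_iff matrix_matrix_mult_def G_def mat_def
        flip: sum_divide_distrib)
  then have "(G ** H)$a$b = mat 1 $a$b" using matrix_left_right_inverse by metis
  then show ?thesis
    by (simp add: matrix_matrix_mult_def G_def mat_def flip: sum_divide_distrib
        split: if_splits)
qed

text \<open>Column orthogonality makes the transpose Hadamard, which lets statements about
  rows be transferred to columns.\<close>

lemma hadamard_transpose:
  fixes H :: "complex^'n^'n"
  assumes had: "complex_hadamard H"
  shows "complex_hadamard (\<chi> i j. H$j$i)"
  unfolding complex_hadamard_def
proof (intro conjI allI)
  show "cmod ((\<chi> i j. H$j$i) $ i $ j) = 1" for i j
    using hadamard_unimodular[OF had] by simp
  have "((\<chi> i j. H$j$i) ** conj_transpose (\<chi> i j. H$j$i))$p$q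
          = cnj (\<Sum>t\<in>UNIV. cnj (H$t$p) * H$t$q)" for p q
    by (simp add: matrix_matrix_mult_def conj_transpose_def mult.commute)
  then show "(\<chi> i j. H$j$i) ** conj_transpose (\<chi> i j. H$j$i) = of_nat CARD('n) *\<^sub>R mat 1"
    using hadamard_columns_orthogonal[OF had]
    by (simp add: vec_eq_iff mat_def) (simp add: scaleR_conv_of_real)
qed

definition perm_mat :: "('n \<Rightarrow> 'n) \<Rightarrow> complex^'n^'n" where
  "perm_mat p = (\<chi> a b. if b = p a then 1 else 0)"

definition diag_mat :: "('n \<Rightarrow> complex) \<Rightarrow> complex^'n^'n" where
  "diag_mat d = (\<chi> a b. if a = b then d a else 0)"

lemma perm_mat_mult: "(perm_mat p ** M)$a$b = M$(p a)$b"
  by (simp add: perm_mat_def matrix_matrix_mult_def if_distrib[of "\<lambda>x. x * _"] cong: if_cong)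

lemma mult_perm_mat_inv:
  assumes "q permutes UNIV"
  shows "(M ** perm_mat (inv q))$a$b = M$a$(q b)"
proof -
  have "(b = inv q t) = (t = q b)" for t by (metis permutes_inv_eq[OF assms])
  then show ?thesis
    by (simp add: perm_mat_def matrix_matrix_mult_def if_distrib[of "\<lambda>x. _ * x"] cong: if_cong)
qed

lemma diag_mat_mult: "(diag_mat d ** M)$a$b = d a * M$a$b"
  by (simp add: diag_mat_def matrix_matrix_mult_def if_distrib[of "\<lambda>x. x * _"] cong: if_cong)

lemma mult_diag_mat: "(M ** diag_mat d)$a$b = M$a$b * d b"
  by (simp add: diag_mat_def matrix_matrix_mult_def if_distrib[of "\<lambda>x. _ * x"] cong: if_cong)

lemma rescaled_permuted_hadamard:
  fixes H :: "complex^'n^'n"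
  assumes had: "complex_hadamard H" and p: "p permutes UNIV" and q: "q permutes UNIV"
    and u: "\<And>x. cmod (u x) = 1" and v: "\<And>x. cmod (v x) = 1"
  defines "K \<equiv> \<chi> a b. u (p a) * H$(p a)$(q b) * v (q b)"
  shows "complex_hadamard K" and "hadamard_equivalent H K"
proof -
  have "(perm_mat p ** diag_mat u ** H)$a$c = u (p a) * H$(p a)$c" for a c
    by (simp add: perm_mat_mult diag_mat_mult flip: matrix_mul_assoc)
  then have "K = perm_mat p ** diag_mat u ** H ** diag_mat v ** perm_mat (inv q)"
    by (simp add: vec_eq_iff K_def mult_perm_mat_inv[OF q] mult_diag_mat)
  moreover have "permutation_matrix (perm_mat p)" "permutation_matrix (perm_mat (inv q))"
    using p permutes_inv[OF q] unfolding permutation_matrix_def perm_mat_def by blast+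
  moreover have "diagonal_unitary (diag_mat u)" "diagonal_unitary (diag_mat v)"
    using u v unfolding diagonal_unitary_def diag_mat_def by blast+
  ultimately show "hadamard_equivalent H K"
    unfolding hadamard_equivalent_def by blast
  have rows: "(\<Sum>t\<in>UNIV. K$a$t * cnj (K$b$t))
          = u (p a) * cnj (u (p b)) * (\<Sum>t\<in>UNIV. H$(p a)$t * cnj (H$(p b)$t))" for a b
  proof -
    have "(\<Sum>t\<in>UNIV. K$a$t * cnj (K$b$t))
          = (\<Sum>t\<in>UNIV. u (p a) * cnj (u (p b)) * (H$(p a)$(q t) * cnj (H$(p b)$(q t)))
                        * (v (q t) * cnj (v (q t))))"
      by (simp add: K_def mult_ac)
    also have "\<dots> = u (p a) * cnj (u (p b)) * (\<Sum>t\<in>UNIV. H$(p a)$(q t) * cnj (H$(p b)$(q t)))"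
      by (simp add: unimodular_mult_cnj[OF v] sum_distrib_left)
    also have "(\<Sum>t\<in>UNIV. H$(p a)$(q t) * cnj (H$(p b)$(q t)))
               = (\<Sum>t\<in>UNIV. H$(p a)$t * cnj (H$(p b)$t))"
      using sum.permute[OF q, of "\<lambda>t. H$(p a)$t * cnj (H$(p b)$t)"] by (simp add: comp_def)
    finally show ?thesis .
  qed
  have "(p a = p b) = (a = b)" for a b
    using permutes_inj[OF p] by (auto dest: injD)
  then have "(\<Sum>t\<in>UNIV. K$a$t * cnj (K$b$t)) = (if a = b then of_nat CARD('n) else 0)" for a b
    using rows hadamard_rows_orthogonal[OF had, of "p a" "p b"] unimodular_mult_cnj[OF u]
    by simp
  moreover have "cmod (K$a$b) = 1" for a b
    by (simp add: K_def norm_mult u v hadamard_unimodular[OF had])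
  ultimately show "complex_hadamard K"
    unfolding complex_hadamard_def
    by (simp add: vec_eq_iff matrix_matrix_mult_def conj_transpose_def mat_def)
      (simp add: scaleR_conv_of_real)
qed

section \<open>H2-reducibility\<close>

text \<open>H is H2-reducible if some 2x2 submatrix is, up to unimodular rescaling,
  the Fourier matrix [[1, 1], [1, -1]].\<close>

definition H2_reducible :: "complex^'n^'n \<Rightarrow> bool" where
  "H2_reducible H \<longleftrightarrow> (\<exists>i k j l. i \<noteq> k \<and> j \<noteq> l \<and> H$i$j * H$k$l + H$i$l * H$k$j = 0)"

lemma H2_reducible_transpose:
  assumes "H2_reducible (\<chi> i j. H$j$i)"
  shows "H2_reducible H"
proof -
  obtain i k j l where "i \<noteq> k" "j \<noteq> l" "H$j$i * H$l$k + H$l$i * H$j$k = 0"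
    using assms unfolding H2_reducible_def by auto
  then show ?thesis
    unfolding H2_reducible_def by (metis mult.commute)
qed

text \<open>Dephasing an H2-reducible 6x6 matrix at the corner of the vanishing 2x2
  relation places a -1 into the core.\<close>

lemma H2_reducible_in_K6_3:
  fixes H :: "complex^6^6"
  assumes had: "complex_hadamard H" and "H2_reducible H"
  shows "in_K6_3 H"
proof -
  obtain i k j l where ik: "i \<noteq> k" and jl: "j \<noteq> l"
    and rel: "H$i$j * H$k$l = - (H$i$l * H$k$j)"
    using \<open>H2_reducible H\<close> unfolding H2_reducible_def by (auto simp: eq_neg_iff_add_eq_0)
  define p where "p = Transposition.transpose 0 i"
  define q where "q = Transposition.transpose 0 j"
  define d1 where "d1 a = cnj (H$a$j)" for a
  define d2 where "d2 b = cnj (H$i$b) * H$i$j" for b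
  define K where "K = (\<chi> a b. d1 (p a) * H$(p a)$(q b) * d2 (q b))"
  have unit: "cmod (H$a$b) = 1" for a b using hadamard_unimodular[OF had] .
  have perms: "p permutes UNIV" "q permutes UNIV"
    unfolding p_def q_def by (simp_all add: permutes_swap_id)
  have "\<And>a. cmod (d1 a) = 1" and "\<And>b. cmod (d2 b) = 1"
    by (simp_all add: d1_def d2_def unit norm_mult)
  note K = rescaled_permuted_hadamard[where u = d1 and v = d2, OF had perms this,
      folded K_def]
  have "K$0$b = (cnj (H$i$j) * H$i$j) * (H$i$(q b) * cnj (H$i$(q b)))" for b
    by (simp add: K_def p_def d1_def d2_def mult_ac)
  moreover have "K$a$0 = (cnj (H$(p a)$j) * H$(p a)$j) * (cnj (H$i$j) * H$i$j)" for a
    by (simp add: K_def q_def d1_def d2_def mult_ac)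
  ultimately have "dephased K"
    unfolding dephased_def by (simp add: unimodular_mult_cnj unimodular_cnj_mult unit)
  have "K$(p k)$(q l) = (cnj (H$k$j) * cnj (H$i$l)) * (H$i$j * H$k$l)"
    by (simp add: K_def p_def q_def d1_def d2_def mult_ac)
  also have "\<dots> = - ((cnj (H$i$l) * H$i$l) * (cnj (H$k$j) * H$k$j))"
    by (simp add: rel mult_ac)
  finally have "K$(p k)$(q l) = -1" by (simp add: unimodular_cnj_mult unit)
  moreover have "p k \<noteq> 0" "q l \<noteq> 0"
    using ik jl by (auto simp: p_def q_def transpose_eq_iff)
  ultimately have "core_has_minus_one K" unfolding core_has_minus_one_def by blast
  with K \<open>dephased K\<close> show ?thesis
    unfolding in_K6_3_def by (intro exI[of _ K] conjI)
qed

section \<open>Rows proportional on half of the columns\<close>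

text \<open>If two rows of a Hadamard matrix of order 2m agree up to a factor on m columns,
  then the m terms of their inner product outside those columns are all equal to -1,
  and any column inside together with any column outside gives the relation.\<close>

lemma proportional_rows_H2_reducible:
  fixes H :: "complex^'n^'n" and C :: "'n set"
  assumes had: "complex_hadamard H" and "p \<noteq> q"
    and card: "CARD('n) = 2 * card C"
    and proportional: "\<And>t. t \<in> C \<Longrightarrow> H$q$t = m * H$p$t"
  shows "H2_reducible H"
proof -
  have unit: "cmod (H$a$b) = 1" for a b using hadamard_unimodular[OF had] .
  have "C \<noteq> {}" using card by auto
  then obtain j where j: "j \<in> C" by blast
  have "cmod m = 1" using proportional[OF j] unit[of q j] unit[of p j] by (simp add: norm_mult)
  define u where "u t = H$p$t * cnj (H$q$t) * m" for t
  have u_unit: "cmod (u t) = 1" for t by (simp add: u_def norm_mult unit \<open>cmod m = 1\<close>)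
  have u_C: "u t = 1" if "t \<in> C" for t
  proof -
    have "u t = (H$p$t * cnj (H$p$t)) * (m * cnj m)" by (simp add: u_def proportional[OF that] mult_ac)
    then show ?thesis by (simp add: unimodular_mult_cnj unit \<open>cmod m = 1\<close>)
  qed
  have "(\<Sum>t\<in>UNIV. u t) = 0"
    using hadamard_rows_orthogonal[OF had, of p q] \<open>p \<noteq> q\<close>
    by (simp add: u_def flip: sum_distrib_right)
  moreover have "(\<Sum>t\<in>UNIV. u t) = (\<Sum>t\<in>UNIV - C. u t) + of_nat (card C)"
    using sum.subset_diff[of C UNIV u] u_C by simp
  moreover have card_out: "card (UNIV - C) = card C"
    using card by (simp add: card_Diff_subset)
  ultimately have sum_out: "(\<Sum>t\<in>UNIV - C. u t) = - of_nat (card (UNIV - C))"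
    by (simp add: eq_neg_iff_add_eq_0)
  have "UNIV - C \<noteq> {}" using card_out \<open>C \<noteq> {}\<close> by (metis card.empty card_0_eq finite)
  then obtain l where l: "l \<in> UNIV - C" by blast
  have "u l = -1" using unimodular_sum_neg_card[OF _ _ sum_out l] u_unit by simp
  then have "H$p$l * m * (cnj (H$q$l) * H$q$l) = - H$q$l" by (simp add: u_def mult_ac)
  then have "H$q$l + H$p$l * m = 0" by (simp add: unimodular_cnj_mult unit)
  have "H$p$j * H$q$l + H$p$l * H$q$j = H$p$j * (H$q$l + H$p$l * m)"
    by (simp add: proportional[OF j] algebra_simps)
  also have "\<dots> = 0" using \<open>H$q$l + H$p$l * m = 0\<close> by simp
  finally have "H$p$j * H$q$l + H$p$l * H$q$j = 0" .
  moreover have "j \<noteq> l" using j l by blast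
  ultimately show ?thesis
    unfolding H2_reducible_def using \<open>p \<noteq> q\<close> by blast
qed

lemma proportional_columns_H2_reducible:
  fixes H :: "complex^'n^'n" and R :: "'n set"
  assumes had: "complex_hadamard H" and "t \<noteq> t'"
    and card: "CARD('n) = 2 * card R"
    and proportional: "\<And>s. s \<in> R \<Longrightarrow> H$s$t' = m * H$s$t"
  shows "H2_reducible H"
proof (rule H2_reducible_transpose)
  show "H2_reducible (\<chi> i j. H$j$i)"
    using proportional_rows_H2_reducible[OF hadamard_transpose[OF had] \<open>t \<noteq> t'\<close> card, of m]
      proportional by simp
qed

section \<open>Singular 3x3 matrices with unimodular entries\<close>

lemma cmod_add_power2: "cmod (a + b) ^ 2 = cmod a ^ 2 + cmod b ^ 2 + 2 * Re (cnj a * b)"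
  unfolding cmod_power2 by (simp add: power2_eq_square algebra_simps)

text \<open>For a unimodular solution (z, w) of x0 + x1 z + x2 w = 0 the number cnj x0 x1 z
  has prescribed real part and prescribed square of its imaginary part: these come
  from the side lengths of the triangle formed by x0, x1 z and x2 w.\<close>

lemma unimodular_solution_shape:
  fixes x0 x1 x2 z w :: complex
  assumes "cmod z = 1" "cmod w = 1" "x0 + x1*z + x2*w = 0"
  shows "Re (cnj x0 * x1 * z) = (cmod x2 ^ 2 - cmod x0 ^ 2 - cmod x1 ^ 2) / 2"
    and "Im (cnj x0 * x1 * z) ^ 2
           = (cmod x0 * cmod x1) ^ 2 - ((cmod x2 ^ 2 - cmod x0 ^ 2 - cmod x1 ^ 2) / 2) ^ 2"
proof -
  have "x0 + x1*z = - (x2*w)" using assms(3) by (simp add: eq_neg_iff_add_eq_0)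
  then have "cmod (x0 + x1*z) ^ 2 = cmod x2 ^ 2" using assms(2) by (simp add: norm_mult)
  moreover have "cmod (x0 + x1*z) ^ 2 = cmod x0 ^ 2 + cmod x1 ^ 2 + 2 * Re (cnj x0 * x1 * z)"
    using cmod_add_power2[of x0 "x1*z"] assms(1) by (simp add: norm_mult mult.assoc)
  ultimately show re: "Re (cnj x0 * x1 * z) = (cmod x2 ^ 2 - cmod x0 ^ 2 - cmod x1 ^ 2) / 2"
    by simp
  have "cmod (cnj x0 * x1 * z) = cmod x0 * cmod x1" using assms(1) by (simp add: norm_mult)
  then have "Re (cnj x0 * x1 * z) ^ 2 + Im (cnj x0 * x1 * z) ^ 2 = (cmod x0 * cmod x1) ^ 2"
    by (metis cmod_power2)
  then show "Im (cnj x0 * x1 * z) ^ 2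
           = (cmod x0 * cmod x1) ^ 2 - ((cmod x2 ^ 2 - cmod x0 ^ 2 - cmod x1 ^ 2) / 2) ^ 2"
    unfolding re by linarith
qed

lemma three_unimodular_solutions:
  fixes x0 x1 x2 :: complex and z w :: "3 \<Rightarrow> complex"
  assumes "x0 \<noteq> 0" "x1 \<noteq> 0" "x2 \<noteq> 0"
    and unit: "\<And>s. cmod (z s) = 1" "\<And>s. cmod (w s) = 1"
    and sol: "\<And>s. x0 + x1 * z s + x2 * w s = 0"
  shows "\<exists>s s'. s \<noteq> s' \<and> z s = z s' \<and> w s = w s'"
proof -
  define k where "k = cnj x0 * x1"
  note shape = unimodular_solution_shape[OF unit sol, folded k_def]
  have same: "z s = z s' \<and> w s = w s'" if "Im (k * z s) = Im (k * z s')" for s s'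
  proof -
    have "k * z s = k * z s'" using that shape(1)[of s] shape(1)[of s'] by (simp add: complex_eq_iff)
    then have "z s = z s'" using \<open>x0 \<noteq> 0\<close> \<open>x1 \<noteq> 0\<close> by (simp add: k_def)
    moreover have "x2 * w s = x2 * w s'"
      using sol[of s] sol[of s'] \<open>z s = z s'\<close> by (metis add_left_cancel)
    ultimately show ?thesis using \<open>x2 \<noteq> 0\<close> by simp
  qed
  have "Im (k * z 1) ^ 2 = Im (k * z 2) ^ 2" "Im (k * z 1) ^ 2 = Im (k * z 3) ^ 2"
    using shape(2) by simp_all
  then consider "Im (k * z 1) = Im (k * z 2)" | "Im (k * z 1) = Im (k * z 3)"
    | "Im (k * z 2) = Im (k * z 3)"
    by (metis power2_eq_iff)
  then show ?thesis
  proof cases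
    case 1
    then show ?thesis using same[of 1 2] by (intro exI[of _ 1] exI[of _ 2]) simp
  next
    case 2
    then show ?thesis using same[of 1 3] by (intro exI[of _ 1] exI[of _ 3]) simp
  next
    case 3
    then show ?thesis using same[of 2 3] by (intro exI[of _ 2] exI[of _ 3]) simp
  qed
qed

lemma two_term_relation_proportional_columns:
  fixes A :: "complex^'n^'m"
  assumes nonzero: "\<And>s t. A$s$t \<noteq> 0" and "\<alpha> \<noteq> 0 \<or> \<beta> \<noteq> 0"
    and rel: "\<And>s. \<alpha> * A$s$t + \<beta> * A$s$t' = 0"
  shows "\<exists>m. \<forall>s. A$s$t' = m * A$s$t"
proof -
  have "\<beta> \<noteq> 0" using rel[of undefined] nonzero assms(2) by auto
  then have "A$s$t' = - \<alpha> / \<beta> * A$s$t" for s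
    using rel[of s] by (simp add: field_simps add_eq_0_iff)
  then show ?thesis by blast
qed

text \<open>A kernel vector without zero coordinates turns every row s into a unimodular
  solution (A s 2 / A s 1, A s 3 / A s 1) of one linear equation; two rows must give the
  same solution and are therefore proportional.\<close>

lemma full_support_kernel_proportional_rows:
  fixes A :: "complex^3^3" and x :: "complex^3"
  assumes unit: "\<And>s t. cmod (A$s$t) = 1"
    and x: "x$1 \<noteq> 0" "x$2 \<noteq> 0" "x$3 \<noteq> 0"
    and rel: "\<And>s. x$1 * A$s$1 + x$2 * A$s$2 + x$3 * A$s$3 = 0"
  shows "\<exists>s s' m. s \<noteq> s' \<and> (\<forall>t. A$s'$t = m * A$s$t)"
proof -
  have nonzero: "A$s$t \<noteq> 0" for s t using unit[of s t] by auto
  have "x$1 + x$2 * (A$s$2 / A$s$1) + x$3 * (A$s$3 / A$s$1) = 0" for s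
  proof -
    have "(x$1 * A$s$1 + x$2 * A$s$2 + x$3 * A$s$3) / A$s$1 = 0" using rel[of s] by simp
    then show ?thesis using nonzero[of s 1] by (simp add: add_divide_distrib)
  qed
  then have "\<exists>s s'. s \<noteq> s' \<and> A$s$2 / A$s$1 = A$s'$2 / A$s'$1 \<and> A$s$3 / A$s$1 = A$s'$3 / A$s'$1"
    using three_unimodular_solutions[OF x,
          where z = "\<lambda>s. A$s$2 / A$s$1" and w = "\<lambda>s. A$s$3 / A$s$1"]
    by (simp add: norm_divide unit)
  then obtain s s' where "s \<noteq> s'" and
    ratios: "A$s'$2 / A$s'$1 = A$s$2 / A$s$1" "A$s'$3 / A$s'$1 = A$s$3 / A$s$1" by metis
  define m where "m = A$s'$1 / A$s$1"
  have scale: "A$s'$t = m * A$s$t" if "A$s'$t / A$s'$1 = A$s$t / A$s$1" for t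
  proof -
    have "A$s'$t = A$s'$1 * (A$s'$t / A$s'$1)" using nonzero[of s' 1] by simp
    also have "\<dots> = m * A$s$t" unfolding that m_def by simp
    finally show ?thesis .
  qed
  have "\<forall>t. A$s'$t = m * A$s$t"
    using scale[of 1] scale[of 2] scale[of 3] ratios nonzero[of s 1] nonzero[of s' 1]
    by (simp add: forall_3)
  then show ?thesis using \<open>s \<noteq> s'\<close> by blast
qed

lemma singular_unimodular_3x3:
  fixes A :: "complex^3^3"
  assumes unit: "\<And>s t. cmod (A$s$t) = 1" and "det A = 0"
  shows "(\<exists>s s' m. s \<noteq> s' \<and> (\<forall>t. A$s'$t = m * A$s$t)) \<or>
         (\<exists>t t' m. t \<noteq> t' \<and> (\<forall>s. A$s$t' = m * A$s$t))"
proof -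
  have nonzero: "A$s$t \<noteq> 0" for s t using unit[of s t] by auto
  have "\<not> invertible A" using \<open>det A = 0\<close> invertible_det_nz by blast
  then obtain x where "x \<noteq> 0" and "A *v x = 0"
    using matrix_left_invertible_ker matrix_left_right_inverse invertible_def by metis
  then have rel: "x$1 * A$s$1 + x$2 * A$s$2 + x$3 * A$s$3 = 0" for s
    by (simp add: vec_eq_iff matrix_vector_mult_def sum_3 mult.commute)
  have x: "x$1 \<noteq> 0 \<or> x$2 \<noteq> 0 \<or> x$3 \<noteq> 0"
    using \<open>x \<noteq> 0\<close> by (auto simp: vec_eq_iff forall_3)
  have distinct: "(1::3) \<noteq> 2" "(1::3) \<noteq> 3" "(2::3) \<noteq> 3" by simp_all
  consider "x$3 = 0" | "x$2 = 0" | "x$1 = 0" | "x$1 \<noteq> 0" "x$2 \<noteq> 0" "x$3 \<noteq> 0" by blast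
  then show ?thesis
  proof cases
    case 1
    then have "\<exists>m. \<forall>s. A$s$2 = m * A$s$1"
      using x rel by (intro two_term_relation_proportional_columns[OF nonzero]) auto
    then show ?thesis using distinct by blast
  next
    case 2
    then have "\<exists>m. \<forall>s. A$s$3 = m * A$s$1"
      using x rel by (intro two_term_relation_proportional_columns[OF nonzero]) auto
    then show ?thesis using distinct by blast
  next
    case 3
    then have "\<exists>m. \<forall>s. A$s$3 = m * A$s$2"
      using x rel by (intro two_term_relation_proportional_columns[OF nonzero]) auto
    then show ?thesis using distinct by blast
  next
    case 4
    then show ?thesis using full_support_kernel_proportional_rows[OF unit _ _ _ rel] by blast
  qed
qed

lemma singular_submatrix_H2_reducible:
  fixes H :: "complex^6^6"
  assumes had: "complex_hadamard H" and "inj r" and "inj c"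
    and "det (submatrix3 H r c) = 0"
  shows "H2_reducible H"
proof -
  have "card (range r) = 3" "card (range c) = 3"
    using \<open>inj r\<close> \<open>inj c\<close> by (simp_all add: card_image)
  then have half: "CARD(6) = 2 * card (range r)" "CARD(6) = 2 * card (range c)" by simp_all
  from singular_unimodular_3x3[of "submatrix3 H r c"] assms
  consider s s' m where "s \<noteq> s'" "\<forall>t. H$(r s')$(c t) = m * H$(r s)$(c t)"
    | t t' m where "t \<noteq> t'" "\<forall>s. H$(r s)$(c t') = m * H$(r s)$(c t)"
    by (auto simp: submatrix3_def hadamard_unimodular)
  then show ?thesis
  proof cases
    case (1 s s' m)
    show ?thesis
    proof (rule proportional_rows_H2_reducible[OF had _ half(2)])
      show "r s \<noteq> r s'" using 1(1) \<open>inj r\<close> by (auto dest: injD)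
      show "H$(r s')$t = m * H$(r s)$t" if "t \<in> range c" for t using that 1(2) by auto
    qed
  next
    case (2 t t' m)
    show ?thesis
    proof (rule proportional_columns_H2_reducible[OF had _ half(1)])
      show "c t \<noteq> c t'" using 2(1) \<open>inj c\<close> by (auto dest: injD)
      show "H$s$(c t') = m * H$s$(c t)" if "s \<in> range r" for s using that 2(2) by auto
    qed
  qed
qed

theorem proposition2p24:
  fixes H :: "complex ^ 6 ^ 6"
  assumes "complex_hadamard H"
    and "inj r" and "inj c"
    and "det (submatrix3 H r c) = 0"
  shows "in_K6_3 H"
  using H2_reducible_in_K6_3[OF assms(1) singular_submatrix_H2_reducible[OF assms]] .

end
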